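(* Let $q\geq 3$ be odd and let $\mu$ be the measure on $[0,1]$ with $d\mu=h\,dm$, $h(x)=1/x$. Then $\mu$ is infinite, $\sigma$-finite and $F_q$-invariant, and the transfer operator $\widehat{F}_q\colon L^1(\mu)\to L^1(\mu)$ of $F_q$ with respect to $\mu$ satisfies $\widehat{F}_q(f)=\mathcal{P}_q(fh)\,h^{-1}$ for all $f\in L^1(\mu)$.
   Context: Let $q\geq 3$ be odd and $\lambda=2\cos(\pi/q)$. Elements of $\mathrm{PGL}_2(\mathbb{R})$ act on $\mathbb{R}\cup\{\infty\}$ by $\begin{bmatrix}a&b\\c&d\end{bmatrix}.x=(ax+b)/(cx+d)$. Put $s(x)=\sin(x\pi/q)/\sin(\pi/q)$, $g_k=\begin{bmatrix}s(k)&-s(k+1)\\-s(k-1)&s(k)\end{bmatrix}$, $Q=\begin{bmatrix}0&1\\1&0\end{bmatrix}$, $K=\{(q+1)/2,\dots,q-1\}$. The generalized Farey map $F_q\colon[0,1]\to[0,1]$ is $F_q(x)=g_k.x$ on $[g_k^{-1}.0,g_k^{-1}.1]$ and $F_q(x)=Qg_k.x$ on $[(Qg_k)^{-1}.1,(Qg_k)^{-1}.0]$, $k\in K$. $m$ is Lebesgue measure on $[0,1]$. For $g\in\mathrm{PGL}_2(\mathbb{R})$, $\tau(g)f(x)=|(g^{-1})'(x)|f(g^{-1}.x)$, and $\mathcal{P}_q=\sum_{k\in K}(\tau(g_k)+\tau(Qg_k))$. For a measure $\nu$ on $[0,1]$, the transfer operator $L$ of $(F_q,\nu)$ on $L^1(\nu)$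 is defined by $\int_B L(f)\,d\nu=\int_{F_q^{-1}(B)}f\,d\nu$ for all Borel $B$ and $f\in L^1(\nu)$. *)

theory Defs
  imports "HOL-Analysis.Analysis"
begin

text \<open>A 2x2 real matrix [[a,b],[c,d]] is represented by the tuple (a,b,c,d);
  its class in PGL_2(R) acts by Moebius transformations.\<close>
type_synonym mat2 = "real \<times> real \<times> real \<times> real"

fun mob :: "mat2 \<Rightarrow> real \<Rightarrow> real" where
  "mob (a, b, c, d) x = (a * x + b) / (c * x + d)"

text \<open>A representative of the inverse in PGL_2(R) (the adjugate).\<close>
fun minv :: "mat2 \<Rightarrow> mat2" where
  "minv (a, b, c, d) = (d, - b, - c, a)"

fun mmul :: "mat2 \<Rightarrow> mat2 \<Rightarrow> mat2" where
  "mmul (a, b, c, d) (a', b', c', d') =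
     (a * a' + b * c', a * b' + b * d', c * a' + d * c', c * b' + d * d')"

definition Qm :: mat2 where "Qm = (0, 1, 1, 0)"

definition sq :: "nat \<Rightarrow> real \<Rightarrow> real" where
  "sq q x = sin (x * pi / real q) / sin (pi / real q)"

definition gk :: "nat \<Rightarrow> nat \<Rightarrow> mat2" where
  "gk q k = (sq q (real k), - sq q (real k + 1), - sq q (real k - 1), sq q (real k))"

definition Kq :: "nat \<Rightarrow> nat set" where
  "Kq q = {(q + 1) div 2 .. q - 1}"

text \<open>The generalized Farey map. On overlapping endpoints of the branch intervals
  (a finite set) some admissible branch is chosen; outside all intervals the value is 0.\<close>
definition Farey :: "nat \<Rightarrow> real \<Rightarrow> real" where
  "Farey q x =
    (if \<exists>k\<in>Kq q. x \<in> {mob (minv (gk q k)) 0 .. mob (minv (gk q k)) 1}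
     then mob (gk q (SOME k. k \<in> Kq q \<and> x \<in> {mob (minv (gk q k)) 0 .. mob (minv (gk q k)) 1})) x
     else if \<exists>k\<in>Kq q. x \<in> {mob (minv (mmul Qm (gk q k))) 1 .. mob (minv (mmul Qm (gk q k))) 0}
     then mob (mmul Qm (gk q (SOME k. k \<in> Kq q \<and>
             x \<in> {mob (minv (mmul Qm (gk q k))) 1 .. mob (minv (mmul Qm (gk q k))) 0}))) x
     else 0)"

definition tau :: "mat2 \<Rightarrow> (real \<Rightarrow> real) \<Rightarrow> real \<Rightarrow> real" where
  "tau g f x = \<bar>deriv (mob (minv g)) x\<bar> * f (mob (minv g) x)"

definition Pq :: "nat \<Rightarrow> (real \<Rightarrow> real) \<Rightarrow> real \<Rightarrow> real" where
  "Pq q f x = (\<Sum>k\<in>Kq q. tau (gk q k) f x + tau (mmul Qm (gk q k)) f x)"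

definition hfun :: "real \<Rightarrow> real" where "hfun x = 1 / x"

definition mu :: "real measure" where
  "mu = density (restrict_space lborel {0..1}) (\<lambda>x. ennreal (hfun x))"

definition invariant_measure :: "'a measure \<Rightarrow> ('a \<Rightarrow> 'a) \<Rightarrow> bool" where
  "invariant_measure M T \<longleftrightarrow> T \<in> measurable M M \<and>
     (\<forall>B\<in>sets M. emeasure M (T -` B \<inter> space M) = emeasure M B)"

text \<open>g represents the value L(f) of the transfer operator of (T, M) at f:
  g in L^1(M) and int_B g dM = int_{T^{-1} B} f dM for all measurable B.\<close>
definition is_transfer_image :: "'a measure \<Rightarrow> ('a \<Rightarrow> 'a) \<Rightarrow> ('a \<Rightarrow> real) \<Rightarrow> ('a \<Rightarrow> real) \<Rightarrow> bool" where
  "is_transfer_image M T f g \<longleftrightarrow> integrable M g \<and>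
     (\<forall>B\<in>sets M. (\<integral>x\<in>B. g x \<partial>M) = (\<integral>x\<in>(T -` B \<inter> space M). f x \<partial>M))"

end

theory Submission
  imports Defs
begin

text \<open>On [0, 1] the Farey map has the branches g_k and Q g_k (k \<in> K), each mapping an interval
  I_j monotonically onto [0, 1]; their inverses H_j are Moebius maps of determinant \<plusminus>1, since
  s(k)^2 - s(k + 1) s(k - 1) = 1. The intervals I_j tile [0, 1] and overlap only in finitely many
  endpoints, so for a Borel set B \<subseteq> [0, 1] the preimage of B under F_q is almost everywhere the
  disjoint union of the sets H_j(B). Changing variables on each branch gives
  \<integral>_B P_q F dm = \<integral>_{F_q^-1(B)} F dm, first for F \<ge> 0 and then for all F in L^1(m).
  For h(x) = 1/x the terms |H_j'| h \<circ> H_j telescope in k, so P_q h = h: taking F = h gives the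
  invariance of \<mu>, taking F = f h the formula for its transfer operator. The measure \<mu> is infinite
  because 1/x is not integrable at 0.\<close>

section \<open>Moebius transformations\<close>

fun mdet :: "mat2 \<Rightarrow> real" where
  "mdet (a, b, c, d) = a * d - b * c"

fun mden :: "mat2 \<Rightarrow> real \<Rightarrow> real" where
  "mden (a, b, c, d) y = c * y + d"

definition mob' :: "mat2 \<Rightarrow> real \<Rightarrow> real" where
  "mob' M y = mdet M / (mden M y)\<^sup>2"

lemma mob_eq: "mob (a, b, c, d) = (\<lambda>y. (a * y + b) / (c * y + d))"
  by (simp add: fun_eq_iff)

lemma minv_minv [simp]: "minv (minv M) = M"
  by (cases M) simp

lemma mdet_minv: "mdet (minv M) = mdet M"
  by (cases M) (simp add: algebra_simps)

lemma mob_uminus: "mob (- a, - b, - c, - d) = mob (a, b, c, d)"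
  by (simp add: fun_eq_iff) (metis minus_add_distrib minus_divide_divide diff_conv_add_uminus)

lemma mob_measurable [measurable]: "mob M \<in> borel_measurable borel"
  by (cases M) (simp add: mob_eq)

lemma mob'_measurable [measurable]: "mob' M \<in> borel_measurable borel"
  by (cases M) (simp add: mob'_def[abs_def])

lemma mob_has_field_derivative:
  assumes "mden M y \<noteq> 0"
  shows "(mob M has_field_derivative mob' M y) (at y)"
  using assms unfolding mob'_def
  by (cases M) (auto intro!: derivative_eq_intros simp: mob_eq field_simps power2_eq_square)

lemma mob_minv_mob:
  assumes "mdet M \<noteq> 0" "mden M y \<noteq> 0"
  shows "mob (minv M) (mob M y) = y"
proof (cases M)
  case (fields a b c d)
  with assms have "d * mob M y - b = mdet M * y / (c * y + d)"
    "- c * mob M y + a = mdet M / (c * y + d)"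
    by (simp_all add: field_simps)
  with assms fields show ?thesis
    by simp
qed

lemma abs_mob'_div_mob:
  assumes "a * y + b \<noteq> 0" "c * y + d \<noteq> 0"
  shows "\<bar>mob' (a, b, c, d) y\<bar> / mob (a, b, c, d) y =
    sgn (a * d - b * c) * (a / (a * y + b) - c / (c * y + d))"
proof -
  have "\<bar>a * d - b * c\<bar> = sgn (a * d - b * c) * (a * d - b * c)"
    by (metis abs_sgn mult.commute)
  then have "\<bar>mob' (a, b, c, d) y\<bar> = sgn (a * d - b * c) * (a * d - b * c) / (c * y + d)\<^sup>2"
    by (simp add: mob'_def abs_divide)
  moreover have "a / (a * y + b) - c / (c * y + d) = (a * d - b * c) / ((a * y + b) * (c * y + d))"
    using assms by (simp add: field_simps)
  ultimately show ?thesis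
    using assms by (simp add: power2_eq_square)
qed

lemma mob'_uminus: "mob' (- a, - b, - c, - d) = mob' (a, b, c, d)"
  by (simp add: fun_eq_iff mob'_def power2_eq_square algebra_simps)

lemma mob_image_interval:
  assumes "mdet M \<noteq> 0" "u \<le> v" and den: "\<And>y. y \<in> {u..v} \<Longrightarrow> mden M y \<noteq> 0"
  shows "mob M ` {u..v} = closed_segment (mob M u) (mob M v)"
proof -
  have "continuous_on {u..v} (mob M)"
    using den mob_has_field_derivative
    by (intro continuous_at_imp_continuous_on) (blast intro: DERIV_isCont)
  moreover have "inj_on (mob M) {u..v}"
    by (rule inj_on_inverseI[where g = "mob (minv M)"]) (use assms mob_minv_mob in blast)
  ultimately show ?thesis
    using continuous_injective_image_segment_1[of u v "mob M"] \<open>u \<le> v\<close>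
    by (simp add: closed_segment_eq_real_ivl)
qed

section \<open>Change of variables for nonnegative integrands\<close>

lemma nn_integral_indicator_eq_if_absolutely_integrable:
  fixes F :: "'a::euclidean_space \<Rightarrow> real"
  assumes [measurable]: "T \<in> sets borel" "F \<in> borel_measurable borel" and F_nonneg: "\<And>x. 0 \<le> F x"
  shows "(\<integral>\<^sup>+x. ennreal (indicator T x * F x) \<partial>lborel) =
    (if F absolutely_integrable_on T then ennreal (integral T F) else \<infinity>)"
proof -
  have [measurable]: "(\<lambda>x. indicator T x *\<^sub>R F x) \<in> borel_measurable lborel"
    by measurable
  then have int_iff: "F absolutely_integrable_on T \<longleftrightarrow> integrable lborel (\<lambda>x. indicator T x * F x)"
    unfolding set_integrable_def by (simp add: integrable_completion)
  show ?thesis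
  proof (cases "F absolutely_integrable_on T")
    case True
    have "(\<integral>x. indicator T x * F x \<partial>lborel) = integral T F"
      using set_lebesgue_integral_eq_integral(2)[OF True]
      by (simp add: set_lebesgue_integral_def integral_completion)
    with True int_iff F_nonneg show ?thesis
      by (simp add: nn_integral_eq_integral)
  next
    case False
    with int_iff F_nonneg show ?thesis
      by (simp add: nn_integral_nonneg_infinite)
  qed
qed

lemma nn_integral_change_of_variables_1:
  fixes g g' F :: "real \<Rightarrow> real"
  assumes [measurable]: "S \<in> sets borel" "g ` S \<in> sets borel"
    "F \<in> borel_measurable borel" "g \<in> borel_measurable borel" "g' \<in> borel_measurable borel"
    and F_nonneg: "\<And>x. 0 \<le> F x"
    and deriv: "\<And>x. x \<in> S \<Longrightarrow> (g has_field_derivative g' x) (at x)"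
    and inj: "inj_on g S"
  shows "(\<integral>\<^sup>+x. ennreal (indicator S x * (\<bar>g' x\<bar> * F (g x))) \<partial>lborel) =
    (\<integral>\<^sup>+x. ennreal (indicator (g ` S) x * F x) \<partial>lborel)"
proof -
  define L where "L x = \<bar>g' x\<bar> * F (g x)" for x
  have [measurable]: "L \<in> borel_measurable borel"
    unfolding L_def by measurable
  have "(L absolutely_integrable_on S \<and> integral S L = b) \<longleftrightarrow>
      (F absolutely_integrable_on g ` S \<and> integral (g ` S) F = b)" for b
    unfolding L_def using deriv inj
    by (intro has_absolute_integral_change_of_variables_1') (auto intro: has_field_derivative_at_within)
  then have "L absolutely_integrable_on S \<longleftrightarrow> F absolutely_integrable_on g ` S"
    "L absolutely_integrable_on S \<Longrightarrow> integral S L = integral (g ` S) F"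
    by blast+
  moreover have "\<And>x. 0 \<le> L x"
    unfolding L_def using F_nonneg by simp
  ultimately show ?thesis
    using F_nonneg by (simp add: L_def[symmetric] nn_integral_indicator_eq_if_absolutely_integrable)
qed

section \<open>The measure mu\<close>

lemma nn_integral_inverse_unit_interval:
  "(\<integral>\<^sup>+x. ennreal (indicator {0..1} x * hfun x) \<partial>lborel) = \<infinity>"
proof -
  have "ennreal (real n) \<le> (\<integral>\<^sup>+x. ennreal (indicator {0..1} x * hfun x) \<partial>lborel)" for n :: nat
  proof -
    define c where "c = exp (- real n)"
    have c: "0 < c" "c \<le> 1"
      unfolding c_def by auto
    have "((\<lambda>x. 1 / x) has_integral (ln 1 - ln c)) {c..1}"
    proof (rule fundamental_theorem_of_calculus)
      fix x assume "x \<in> {c..1}"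
      with c have "(ln has_real_derivative 1 / x) (at x within {c..1})"
        by (auto intro!: derivative_eq_intros)
      then show "(ln has_vector_derivative 1 / x) (at x within {c..1})"
        by (simp add: has_real_derivative_iff_has_vector_derivative)
    qed (use c in simp)
    then have "(\<integral>\<^sup>+x. ennreal (1 / x) * indicator {c..1} x \<partial>lborel) = ennreal (ln 1 - ln c)"
      using c by (intro nn_integral_has_integral_lebesgue') auto
    then have "ennreal (real n) = (\<integral>\<^sup>+x. ennreal (1 / x) * indicator {c..1} x \<partial>lborel)"
      by (simp add: c_def)
    also have "\<dots> \<le> (\<integral>\<^sup>+x. ennreal (indicator {0..1} x * hfun x) \<partial>lborel)"
      using c by (intro nn_integral_mono) (auto simp: hfun_def indicator_def)
    finally show ?thesis .
  qed
  then have "(SUP n. of_nat n :: ennreal) \<le> (\<integral>\<^sup>+x. ennreal (indicator {0..1} x * hfun x) \<partial>lborel)"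
    by (intro SUP_least) (simp add: ennreal_of_nat_eq_real_of_nat)
  then show ?thesis
    by (simp add: ennreal_SUP_of_nat_eq_top top_unique)
qed

lemma space_mu: "space mu = {0..1}"
  unfolding mu_def by simp

lemma sets_mu: "A \<in> sets mu \<longleftrightarrow> A \<in> sets borel \<and> A \<subseteq> {0..1}"
  unfolding mu_def by (auto simp: sets_restrict_space_iff)

lemma hfun_measurable [measurable]: "hfun \<in> borel_measurable borel"
  unfolding hfun_def[abs_def] by measurable

lemma measurable_mu_iff:
  fixes f :: "real \<Rightarrow> real"
  shows "f \<in> borel_measurable mu \<longleftrightarrow> (\<lambda>x. indicator {0..1} x * f x) \<in> borel_measurable lborel"
  using borel_measurable_restrict_space_iff[of "{0..1}" lborel f]
  unfolding mu_def by (simp cong: measurable_cong_sets)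

lemma emeasure_mu:
  assumes "A \<in> sets mu"
  shows "emeasure mu A = (\<integral>\<^sup>+x. ennreal (indicator A x * hfun x) \<partial>lborel)"
proof -
  have A: "A \<in> sets borel" "A \<subseteq> {0..1}"
    using assms sets_mu by auto
  have "emeasure mu A = (\<integral>\<^sup>+x. ennreal (hfun x) * indicator A x \<partial>restrict_space lborel {0..1})"
    unfolding mu_def using A
    by (intro emeasure_density) (auto simp: sets_restrict_space_iff intro: measurable_restrict_space1)
  also have "\<dots> = (\<integral>\<^sup>+x. ennreal (indicator A x * hfun x) \<partial>lborel)"
    using A by (subst nn_integral_restrict_space) (auto intro!: nn_integral_cong simp: indicator_def)
  finally show ?thesis .
qed

lemma mu_infinite: "emeasure mu (space mu) = \<infinity>"
  using emeasure_mu[of "{0..1}"] nn_integral_inverse_unit_interval by (simp add: space_mu sets_mu)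

lemma mu_sigma_finite: "sigma_finite_measure mu"
proof -
  have "sigma_finite_measure (restrict_space lborel {0..1::real})"
    by (rule sigma_finite_measure_restrict_space[OF sigma_finite_lborel]) simp
  moreover have "(\<lambda>x. ennreal (hfun x)) \<in> borel_measurable (restrict_space lborel {0..1})"
    by (intro measurable_restrict_space1) measurable
  ultimately show ?thesis
    unfolding mu_def using sigma_finite_measure.sigma_finite_iff_density_finite by fastforce
qed

lemma integral_mu:
  assumes "f \<in> borel_measurable mu"
  shows "(\<integral>x. f x \<partial>mu) = (\<integral>x. indicator {0..1} x * (hfun x * f x) \<partial>lborel)"
    and "integrable mu f \<longleftrightarrow> integrable lborel (\<lambda>x. indicator {0..1} x * (hfun x * f x))"
proof -
  let ?R = "restrict_space lborel {0..1}"
  have [measurable]: "f \<in> borel_measurable ?R" "hfun \<in> borel_measurable ?R"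
    using assms unfolding mu_def
    by (auto cong: measurable_cong_sets intro: measurable_restrict_space1)
  have nonneg: "AE x in ?R. 0 \<le> hfun x"
    by (auto simp: AE_restrict_space_iff hfun_def)
  show "(\<integral>x. f x \<partial>mu) = (\<integral>x. indicator {0..1} x * (hfun x * f x) \<partial>lborel)"
    unfolding mu_def using nonneg by (simp add: integral_density integral_restrict_space)
  show "integrable mu f \<longleftrightarrow> integrable lborel (\<lambda>x. indicator {0..1} x * (hfun x * f x))"
    unfolding mu_def using nonneg by (simp add: integrable_density integrable_restrict_space)
qed

lemma set_integral_mu:
  assumes "A \<in> sets mu" "f \<in> borel_measurable mu"
  shows "(\<integral>x\<in>A. f x \<partial>mu) = (\<integral>x. indicator A x * (hfun x * f x) \<partial>lborel)"
proof -
  have "(\<lambda>x. indicator A x * f x) \<in> borel_measurable mu"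
    using assms by measurable
  moreover have "A \<subseteq> {0..1}"
    using assms(1) sets_mu by blast
  ultimately show ?thesis
    unfolding set_lebesgue_integral_def
    by (simp add: integral_mu(1)) (auto intro!: Bochner_Integration.integral_cong simp: indicator_def)
qed

section \<open>The branches of the generalized Farey map\<close>

lemma sin_squared_diff_sin_add_mult_sin_diff:
  fixes x t :: real
  shows "sin x ^ 2 - sin (x + t) * sin (x - t) = sin t ^ 2"
proof -
  have "sin (x + t) * sin (x - t) = sin x ^ 2 * cos t ^ 2 - cos x ^ 2 * sin t ^ 2"
    by (simp add: sin_add sin_diff algebra_simps power2_eq_square)
  then show ?thesis
    by (simp add: cos_squared_eq algebra_simps)
qed

lemma antitone_intervals_cover:
  fixes u :: "nat \<Rightarrow> 'a::linorder"
  assumes "m < n" "\<And>i. m \<le> i \<Longrightarrow> i < n \<Longrightarrow> u (Suc i) \<le> u i" "u n \<le> x" "x \<le> u m"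
  shows "\<exists>k\<in>{m<..n}. u k \<le> x \<and> x \<le> u (k - 1)"
  using assms
proof (induction n)
  case (Suc n)
  show ?case
  proof (cases "m < n \<and> u n \<le> x")
    case True
    with Suc.IH Suc.prems(2,4) show ?thesis
      by fastforce
  next
    case False
    with Suc.prems have "x \<le> u n"
      by (cases "m = n") auto
    with Suc.prems(1,3) show ?thesis
      by (intro bexI[of _ "Suc n"]) auto
  qed
qed simp

locale odd_farey =
  fixes q :: nat
  assumes odd_q: "odd q" and q_ge_3: "3 \<le> q"
begin

definition m :: nat where
  "m = (q - 1) div 2"

definition s :: "nat \<Rightarrow> real" where
  "s j = sq q (real j)"

lemma q_eq: "q = 2 * m + 1"
  using odd_q unfolding m_def by (auto elim!: oddE)

lemma m_pos: "0 < m"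
  using q_eq q_ge_3 by linarith

lemma Kq_eq: "Kq q = {m + 1..q - 1}"
proof -
  have "(q + 1) div 2 = m + 1"
    using q_eq by presburger
  then show ?thesis
    unfolding Kq_def by simp
qed

lemma mem_Kq: "k \<in> Kq q \<longleftrightarrow> m < k \<and> k < q"
  unfolding Kq_eq by auto

lemma s_pos: "0 < j \<Longrightarrow> j < q \<Longrightarrow> 0 < s j"
  unfolding s_def sq_def using q_ge_3
  by (intro divide_pos_pos sin_gt_zero) (auto simp: field_simps)

lemma s_nonneg: "j \<le> q \<Longrightarrow> 0 \<le> s j"
  unfolding s_def sq_def using q_ge_3
  by (intro divide_nonneg_pos sin_ge_zero sin_gt_zero) (auto simp: field_simps)

lemma s_q: "s q = 0"
  unfolding s_def sq_def using q_ge_3 by simp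

lemma s_Suc_m: "s (m + 1) = s m"
proof -
  have "real q = 2 * real m + 1"
    using arg_cong[OF q_eq, of real] by simp
  then have "real (m + 1) * pi / real q = pi - real m * pi / real q"
    by (simp add: field_simps)
  then show ?thesis
    unfolding s_def sq_def by simp
qed

lemma s_det:
  assumes "0 < k"
  shows "s k * s k - s (k + 1) * s (k - 1) = 1"
proof -
  define t where "t = pi / real q"
  have "0 < sin t"
    unfolding t_def using q_ge_3 by (intro sin_gt_zero) (auto simp: field_simps)
  have "\<And>j. s j = sin (real j * t) / sin t"
    unfolding s_def sq_def t_def by simp
  moreover have "real (k + 1) * t = real k * t + t" "real (k - 1) * t = real k * t - t"
    using assms by (simp_all add: of_nat_diff algebra_simps)
  ultimately have "s k * s k - s (k + 1) * s (k - 1) =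
      (sin (real k * t) ^ 2 - sin (real k * t + t) * sin (real k * t - t)) / sin t ^ 2"
    by (simp add: power2_eq_square diff_divide_distrib)
  with \<open>0 < sin t\<close> show ?thesis
    by (simp add: sin_squared_diff_sin_add_mult_sin_diff)
qed

lemma s_pos_Kq:
  assumes "k \<in> Kq q"
  shows "0 < s k" "0 < s (k - 1)" "0 \<le> s (k + 1)"
  using assms m_pos by (auto simp: mem_Kq intro!: s_pos s_nonneg)

text \<open>The two branches of the Farey map with index k live on [a k, b k] and [b k, a (k - 1)].\<close>

definition a :: "nat \<Rightarrow> real" where
  "a k = s (k + 1) / s k"

definition b :: "nat \<Rightarrow> real" where
  "b k = (s (k + 1) + s k) / (s k + s (k - 1))"

lemma a_pred: "0 < k \<Longrightarrow> a (k - 1) = s k / s (k - 1)"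
  unfolding a_def by simp

lemma a_less_b:
  assumes "k \<in> Kq q"
  shows "a k < b k"
proof -
  have "s (k + 1) * (s k + s (k - 1)) < s k * (s (k + 1) + s k)"
    using s_det[of k] assms m_pos by (simp add: mem_Kq algebra_simps)
  with s_pos_Kq[OF assms] show ?thesis
    unfolding a_def b_def by (simp add: field_simps)
qed

lemma b_less_a_pred:
  assumes "k \<in> Kq q"
  shows "b k < a (k - 1)"
proof -
  have "(s (k + 1) + s k) * s (k - 1) < s k * (s k + s (k - 1))"
    using s_det[of k] assms m_pos by (simp add: mem_Kq algebra_simps)
  moreover have "a (k - 1) = s k / s (k - 1)"
    using assms m_pos by (intro a_pred) (simp add: mem_Kq)
  ultimately show ?thesis
    using s_pos_Kq[OF assms] unfolding b_def by (simp only:) (simp add: field_simps)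
qed

lemma a_nonneg: "k \<in> Kq q \<Longrightarrow> 0 \<le> a k"
  using s_pos_Kq[of k] unfolding a_def by simp

lemma a_last: "a (q - 1) = 0"
  unfolding a_def using q_ge_3 s_q by simp

lemma a_m: "a m = 1"
proof -
  have "m < q"
    using q_eq by linarith
  then show ?thesis
    unfolding a_def using s_Suc_m s_pos[of m] m_pos by simp
qed

lemma a_Suc_le:
  assumes "m \<le> i" "i < q - 1"
  shows "a (Suc i) \<le> a i"
proof -
  have "Suc i \<in> Kq q"
    using assms by (simp add: mem_Kq)
  from a_less_b[OF this] b_less_a_pred[OF this] show ?thesis
    by simp
qed

lemma a_antitone:
  assumes "m \<le> i" "i \<le> j" "j \<le> q - 1"
  shows "a j \<le> a i"
  using assms(2,3)
proof (induction j rule: dec_induct)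
  case (step n)
  then have "a (Suc n) \<le> a n"
    using assms(1) by (intro a_Suc_le) auto
  with step show ?case
    by simp
qed simp

lemma a_pred_le_1:
  assumes "k \<in> Kq q"
  shows "a (k - 1) \<le> 1"
proof -
  have "a (k - 1) \<le> a m"
    using assms by (intro a_antitone) (auto simp: mem_Kq)
  then show ?thesis
    by (simp add: a_m)
qed

definition J :: "(nat \<times> bool) set" where
  "J = Kq q \<times> UNIV"

definition branch :: "nat \<times> bool \<Rightarrow> mat2" where
  "branch j = (if snd j then mmul Qm (gk q (fst j)) else gk q (fst j))"

definition H :: "nat \<times> bool \<Rightarrow> real \<Rightarrow> real" where
  "H j = mob (minv (branch j))"

definition I :: "nat \<times> bool \<Rightarrow> real set" where
  "I j = H j ` {0..1}"

lemma mem_J [simp]: "(k, t) \<in> J \<longleftrightarrow> k \<in> Kq q"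
  unfolding J_def by simp

lemma finite_J: "finite J"
  unfolding J_def Kq_def by simp

lemma sum_J: "(\<Sum>j\<in>J. f j) = (\<Sum>k\<in>Kq q. f (k, False) + f (k, True))"
proof -
  have "(\<Sum>j\<in>Kq q \<times> {False, True}. f j) = (\<Sum>k\<in>Kq q. \<Sum>t\<in>{False, True}. f (k, t))"
    by (subst sum.cartesian_product) simp
  then show ?thesis
    by (simp add: J_def UNIV_bool add.commute)
qed

lemma minv_branch:
  assumes "0 < k"
  shows "minv (branch (k, False)) = (s k, s (k + 1), s (k - 1), s k)"
    and "minv (branch (k, True)) = (- s (k + 1), - s k, - s k, - s (k - 1))"
proof -
  have "gk q k = (s k, - s (k + 1), - s (k - 1), s k)"
    using assms unfolding gk_def s_def by (simp add: of_nat_diff add.commute)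
  then show "minv (branch (k, False)) = (s k, s (k + 1), s (k - 1), s k)"
    and "minv (branch (k, True)) = (- s (k + 1), - s k, - s k, - s (k - 1))"
    by (simp_all add: branch_def Qm_def)
qed

lemma branch_cases:
  assumes "j \<in> J"
  obtains k where "k \<in> Kq q" "0 < k" "j = (k, False)"
    "minv (branch j) = (s k, s (k + 1), s (k - 1), s k)"
  | k where "k \<in> Kq q" "0 < k" "j = (k, True)"
    "minv (branch j) = (- s (k + 1), - s k, - s k, - s (k - 1))"
proof -
  obtain k t where j: "j = (k, t)" and k: "k \<in> Kq q" "0 < k"
    using assms m_pos by (cases j) (auto simp: mem_Kq)
  then show ?thesis
    using that minv_branch[OF k(2)] by (cases t) auto
qed

lemma mdet_branch:
  assumes "j \<in> J"
  shows "mdet (branch j) = (if snd j then - 1 else 1)"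
  using assms
proof (cases rule: branch_cases)
  case (1 k)
  with mdet_minv[of "branch j"] s_det[of k] show ?thesis
    by simp
next
  case (2 k)
  with mdet_minv[of "branch j"] s_det[of k] show ?thesis
    by (simp add: algebra_simps)
qed

lemma mdet_minv_branch_nonzero: "j \<in> J \<Longrightarrow> mdet (minv (branch j)) \<noteq> 0"
  by (simp add: mdet_minv mdet_branch)

lemma mden_H_nonzero:
  assumes "j \<in> J" "0 \<le> y"
  shows "mden (minv (branch j)) y \<noteq> 0"
  using assms(1)
proof (cases rule: branch_cases)
  case (1 k)
  with s_pos_Kq[of k] assms(2) have "0 < s (k - 1) * y + s k"
    by (simp add: add_nonneg_pos)
  with 1 show ?thesis
    by simp
next
  case (2 k)
  with s_pos_Kq[of k] assms(2) have "0 < s k * y + s (k - 1)"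
    by (simp add: add_nonneg_pos)
  with 2 show ?thesis
    by simp
qed

lemma H_has_field_derivative:
  "j \<in> J \<Longrightarrow> 0 \<le> y \<Longrightarrow> (H j has_field_derivative mob' (minv (branch j)) y) (at y)"
  unfolding H_def by (intro mob_has_field_derivative mden_H_nonzero)

lemma mob_branch_H: "j \<in> J \<Longrightarrow> 0 \<le> y \<Longrightarrow> mob (branch j) (H j y) = y"
  using mob_minv_mob[of "minv (branch j)" y] mdet_minv_branch_nonzero[of j] mden_H_nonzero[of j y]
  by (simp add: H_def)

lemma inj_on_H: "j \<in> J \<Longrightarrow> S \<subseteq> {0..} \<Longrightarrow> inj_on (H j) S"
  by (rule inj_on_inverseI[where g = "mob (branch j)"]) (auto simp: mob_branch_H)

lemma H_endpoints:
  assumes "k \<in> Kq q"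
  shows "H (k, False) 0 = a k" "H (k, False) 1 = b k"
    "H (k, True) 0 = a (k - 1)" "H (k, True) 1 = b k"
proof -
  have "0 < k"
    using assms m_pos by (simp add: mem_Kq)
  then show "H (k, False) 0 = a k" "H (k, False) 1 = b k"
    "H (k, True) 0 = a (k - 1)" "H (k, True) 1 = b k"
    using mob_uminus[of "s (k + 1)" "s k" "s k" "s (k - 1)"]
    unfolding H_def minv_branch[OF \<open>0 < k\<close>] a_def b_def a_pred[OF \<open>0 < k\<close>]
    by (simp_all add: add.commute)
qed

lemma I_eq:
  assumes "k \<in> Kq q"
  shows "I (k, False) = {a k..b k}" and "I (k, True) = {b k..a (k - 1)}"
proof -
  have "I j = closed_segment (H j 0) (H j 1)" if "j \<in> J" for j
    unfolding I_def H_def using that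
    by (intro mob_image_interval mden_H_nonzero mdet_minv_branch_nonzero) auto
  then show "I (k, False) = {a k..b k}" "I (k, True) = {b k..a (k - 1)}"
    using assms H_endpoints[OF assms] a_less_b[OF assms] b_less_a_pred[OF assms]
    by (simp_all add: closed_segment_eq_real_ivl)
qed

lemma I_subset: "j \<in> J \<Longrightarrow> I j \<subseteq> {a (fst j)..a (fst j - 1)}"
  using I_eq a_less_b b_less_a_pred by (cases j; cases "snd j") fastforce+

lemma I_subset_unit_interval:
  assumes "j \<in> J"
  shows "I j \<subseteq> {0..1}"
proof -
  have "fst j \<in> Kq q"
    using assms by (cases j) simp
  then show ?thesis
    using I_subset[OF assms] a_nonneg a_pred_le_1 by fastforce
qed

lemma I_cover:
  assumes "x \<in> {0..1}"
  shows "\<exists>j\<in>J. x \<in> I j"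
proof -
  have "m < q - 1"
    using q_eq m_pos by linarith
  then obtain k where k: "k \<in> {m<..q - 1}" "a k \<le> x" "x \<le> a (k - 1)"
    using antitone_intervals_cover[of m "q - 1" a x] assms a_Suc_le a_last a_m by auto
  then have "k \<in> Kq q"
    using q_ge_3 by (auto simp: mem_Kq)
  then have "x \<in> I (k, x > b k)"
    using I_eq k by (cases "x \<le> b k") auto
  with \<open>k \<in> Kq q\<close> show ?thesis
    by (intro bexI) auto
qed

definition endpoints :: "real set" where
  "endpoints = a ` Kq q \<union> b ` Kq q"

lemma finite_endpoints: "finite endpoints"
  unfolding endpoints_def Kq_def by simp

lemma I_overlap:
  assumes "j \<in> J" "j' \<in> J" "x \<in> I j" "x \<in> I j'" "j \<noteq> j'"
  shows "x \<in> endpoints"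
proof -
  have lt: "x \<in> endpoints" if "(k, t) \<in> J" "(k', t') \<in> J" "x \<in> I (k, t)" "x \<in> I (k', t')" "k < k'"
    for k t k' t'
  proof -
    have "a (k' - 1) \<le> a k"
      using that by (intro a_antitone) (auto simp: mem_Kq)
    then have "x = a k"
      using I_subset[OF that(1)] I_subset[OF that(2)] that(3,4) by fastforce
    then show ?thesis
      using that(1) by (simp add: endpoints_def)
  qed
  obtain k t k' t' where j: "j = (k, t)" "j' = (k', t')"
    by (cases j, cases j')
  consider "k < k'" | "k' < k" | "k = k'" "t \<noteq> t'"
    using assms(5) j by fastforce
  then show ?thesis
  proof cases
    case 3
    then have "x = b k"
      using assms(1-4) j I_eq[of k] by (cases t) auto
    then show ?thesis
      using assms(1) j by (simp add: endpoints_def)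
  qed (use lt assms j in blast)+
qed

lemma sum_J_single:
  assumes "x \<notin> endpoints" "j \<in> J" "x \<in> I j" and vanish: "\<And>i. i \<in> J \<Longrightarrow> x \<notin> I i \<Longrightarrow> f i = 0"
  shows "(\<Sum>i\<in>J. f i) = f j"
proof -
  have "(\<Sum>i\<in>J - {j}. f i) = 0"
    using vanish I_overlap assms(1-3) by (intro sum.neutral) blast
  then show ?thesis
    using sum.remove[OF finite_J assms(2), of f] by simp
qed

lemma mob_branch_in_unit_interval:
  "j \<in> J \<Longrightarrow> x \<in> I j \<Longrightarrow> mob (branch j) x \<in> {0..1}"
  unfolding I_def by (auto simp: mob_branch_H)

lemma image_H:
  assumes "j \<in> J" "B \<subseteq> {0..1}"
  shows "H j ` B = I j \<inter> mob (branch j) -` B"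
proof
  show "H j ` B \<subseteq> I j \<inter> mob (branch j) -` B"
    using assms mob_branch_H[OF assms(1)] by (auto simp: I_def)
  show "I j \<inter> mob (branch j) -` B \<subseteq> H j ` B"
  proof
    fix x
    assume x: "x \<in> I j \<inter> mob (branch j) -` B"
    then obtain y where "y \<in> {0..1}" "x = H j y"
      unfolding I_def by blast
    with x mob_branch_H[OF assms(1), of y] show "x \<in> H j ` B"
      by auto
  qed
qed

lemma Farey_eq_if:
  "Farey q x =
    (if \<exists>k\<in>Kq q. x \<in> I (k, False)
     then mob (branch (SOME k. k \<in> Kq q \<and> x \<in> I (k, False), False)) x
     else if \<exists>k\<in>Kq q. x \<in> I (k, True)
     then mob (branch (SOME k. k \<in> Kq q \<and> x \<in> I (k, True), True)) x
     else 0)"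
proof -
  have "{mob (minv (gk q k)) 0..mob (minv (gk q k)) 1} = I (k, False)"
    "{mob (minv (mmul Qm (gk q k))) 1..mob (minv (mmul Qm (gk q k))) 0} = I (k, True)"
    if "k \<in> Kq q" for k
    using I_eq[OF that] H_endpoints[OF that] unfolding H_def branch_def by simp_all
  then show ?thesis
    unfolding Farey_def branch_def by (simp cong: conj_cong)
qed

lemma Farey_branch:
  assumes "j \<in> J" "x \<in> I j"
  shows "\<exists>j'\<in>J. x \<in> I j' \<and> Farey q x = mob (branch j') x"
proof (cases "\<exists>k\<in>Kq q. x \<in> I (k, False)")
  case True
  then have "\<exists>k. k \<in> Kq q \<and> x \<in> I (k, False)"
    by blast
  from someI_ex[OF this] True show ?thesis
    unfolding Farey_eq_if by auto
next
  case False
  with assms have "\<exists>k. k \<in> Kq q \<and> x \<in> I (k, True)"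
    by (cases j) (metis mem_J)
  from someI_ex[OF this] False show ?thesis
    unfolding Farey_eq_if by auto
qed

lemma Farey_outside: "x \<notin> {0..1} \<Longrightarrow> Farey q x = 0"
  unfolding Farey_eq_if using I_subset_unit_interval by (metis mem_J subsetD)

lemma Farey_eq_branch:
  assumes "j \<in> J" "x \<in> I j" "x \<notin> endpoints"
  shows "Farey q x = mob (branch j) x"
  using Farey_branch[OF assms(1,2)] I_overlap[OF assms(1) _ assms(2)] assms(3) by metis

lemma Farey_in_unit_interval: "x \<in> {0..1} \<Longrightarrow> Farey q x \<in> {0..1}"
  using I_cover Farey_branch mob_branch_in_unit_interval by metis

lemma I_borel: "j \<in> J \<Longrightarrow> I j \<in> sets borel"
  using I_eq by (cases j; cases "snd j") auto

lemma Farey_measurable [measurable]: "Farey q \<in> borel_measurable borel"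
proof (rule measurable_discrete_difference[where X = endpoints])
  show "(\<lambda>x. \<Sum>j\<in>J. indicator (I j) x * mob (branch j) x) \<in> borel_measurable borel"
    by (intro borel_measurable_sum borel_measurable_times borel_measurable_indicator mob_measurable I_borel)
  show "countable endpoints"
    by (simp add: finite_endpoints countable_finite)
  fix x
  assume "x \<notin> endpoints"
  show "(\<Sum>j\<in>J. indicator (I j) x * mob (branch j) x) = Farey q x"
  proof (cases "x \<in> {0..1}")
    case True
    then obtain j where "j \<in> J" "x \<in> I j"
      using I_cover by blast
    with \<open>x \<notin> endpoints\<close> show ?thesis
      by (subst sum_J_single) (auto simp: Farey_eq_branch)
  next
    case False
    then have "x \<notin> I j" if "j \<in> J" for j
      using I_subset_unit_interval[OF that] by blast
    with False show ?thesis
      by (simp add: Farey_outside)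
  qed
qed auto

section \<open>The transfer operator with respect to Lebesgue measure\<close>

text \<open>Pq with the derivatives of the inverse branches written out instead of taken with deriv:
  this makes it Borel measurable on the whole real line, and it agrees with Pq on [0, \<infinity>).\<close>

definition PF :: "(real \<Rightarrow> real) \<Rightarrow> real \<Rightarrow> real" where
  "PF F y = (\<Sum>j\<in>J. \<bar>mob' (minv (branch j)) y\<bar> * F (H j y))"

lemma Pq_eq_PF:
  assumes "0 \<le> y"
  shows "Pq q F y = PF F y"
proof -
  have tau_eq: "tau (branch j) F y = \<bar>mob' (minv (branch j)) y\<bar> * F (H j y)" if "j \<in> J" for j
    using DERIV_imp_deriv[OF H_has_field_derivative[OF that assms]] unfolding tau_def H_def by simp
  have "tau (gk q k) F y = \<bar>mob' (minv (gk q k)) y\<bar> * F (H (k, False) y)"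
    "tau (mmul Qm (gk q k)) F y = \<bar>mob' (minv (mmul Qm (gk q k))) y\<bar> * F (H (k, True) y)"
    if "k \<in> Kq q" for k
    using tau_eq[of "(k, False)"] tau_eq[of "(k, True)"] that by (simp_all add: branch_def)
  then show ?thesis
    unfolding Pq_def PF_def sum_J by (intro sum.cong) (simp_all add: branch_def)
qed

lemma PF_measurable [measurable]:
  assumes [measurable]: "F \<in> borel_measurable borel"
  shows "PF F \<in> borel_measurable borel"
  unfolding PF_def[abs_def] H_def by measurable

lemma PF_diff: "PF (\<lambda>x. F x - G x) y = PF F y - PF G y"
  unfolding PF_def by (simp add: sum_subtractf algebra_simps)

lemma PF_nonneg: "(\<And>x. 0 \<le> F x) \<Longrightarrow> 0 \<le> PF F y"
  unfolding PF_def by (intro sum_nonneg mult_nonneg_nonneg) auto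

lemma sum_indicator_image_H:
  assumes "x \<notin> endpoints" "B \<subseteq> {0..1}"
  shows "(\<Sum>j\<in>J. indicator (H j ` B) x) = (indicator (Farey q -` B \<inter> {0..1}) x :: real)"
proof -
  have HB: "H j ` B \<subseteq> I j" for j
    unfolding I_def using assms(2) by blast
  show ?thesis
  proof (cases "x \<in> {0..1}")
    case True
    then obtain j where j: "j \<in> J" "x \<in> I j"
      using I_cover by blast
    then have "(\<Sum>i\<in>J. indicator (H i ` B) x) = (indicator (H j ` B) x :: real)"
      using assms(1) HB by (intro sum_J_single) (fastforce simp: indicator_def)+
    also have "\<dots> = indicator (Farey q -` B \<inter> {0..1}) x"
      using image_H[OF j(1) assms(2)] Farey_eq_branch[OF j assms(1)] j(2) True
      by (simp add: indicator_def)
    finally show ?thesis .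
  next
    case False
    then have "x \<notin> H j ` B" if "j \<in> J" for j
      using HB I_subset_unit_interval[OF that] by blast
    with False show ?thesis
      by simp
  qed
qed

lemma nn_integral_PF:
  assumes [measurable]: "B \<in> sets borel" "F \<in> borel_measurable borel"
    and B: "B \<subseteq> {0..1}" and F_nonneg: "\<And>x. 0 \<le> F x"
  shows "(\<integral>\<^sup>+y. ennreal (indicator B y * PF F y) \<partial>lborel) =
    (\<integral>\<^sup>+x. ennreal (indicator (Farey q -` B \<inter> {0..1}) x * F x) \<partial>lborel)"
proof -
  have HB [measurable]: "H j ` B \<in> sets borel" if "j \<in> J" for j
    using I_borel[OF that] unfolding image_H[OF that B] by measurable
  have "(\<integral>\<^sup>+y. ennreal (indicator B y * PF F y) \<partial>lborel) =
      (\<integral>\<^sup>+y. (\<Sum>j\<in>J. ennreal (indicator B y * (\<bar>mob' (minv (branch j)) y\<bar> * F (H j y)))) \<partial>lborel)"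
    using F_nonneg
    by (intro nn_integral_cong) (simp add: PF_def sum_distrib_left sum_ennreal)
  also have "\<dots> = (\<Sum>j\<in>J. \<integral>\<^sup>+y. ennreal (indicator B y * (\<bar>mob' (minv (branch j)) y\<bar> * F (H j y))) \<partial>lborel)"
    unfolding H_def by (intro nn_integral_sum) measurable
  also have "\<dots> = (\<Sum>j\<in>J. \<integral>\<^sup>+x. ennreal (indicator (H j ` B) x * F x) \<partial>lborel)"
  proof (intro sum.cong refl nn_integral_change_of_variables_1)
    fix j
    assume "j \<in> J"
    then show "H j ` B \<in> sets borel" "inj_on (H j) B"
      "\<And>y. y \<in> B \<Longrightarrow> (H j has_field_derivative mob' (minv (branch j)) y) (at y)"
      using B by (auto intro!: inj_on_H H_has_field_derivative)
  qed (auto simp: H_def F_nonneg)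
  also have "\<dots> = (\<integral>\<^sup>+x. (\<Sum>j\<in>J. ennreal (indicator (H j ` B) x * F x)) \<partial>lborel)"
    by (intro nn_integral_sum[symmetric]) measurable
  also have "\<dots> = (\<integral>\<^sup>+x. ennreal (indicator (Farey q -` B \<inter> {0..1}) x * F x) \<partial>lborel)"
  proof (intro nn_integral_cong_AE)
    have "AE x in lborel. x \<notin> endpoints"
      by (rule AE_discrete_difference) (auto simp: finite_endpoints countable_finite)
    then show "AE x in lborel. (\<Sum>j\<in>J. ennreal (indicator (H j ` B) x * F x)) =
        ennreal (indicator (Farey q -` B \<inter> {0..1}) x * F x)"
    proof eventually_elim
      case (elim x)
      then show ?case
        using F_nonneg sum_indicator_image_H[OF _ B]
        by (simp add: sum_ennreal sum_distrib_right[symmetric])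
    qed
  qed
  finally show ?thesis .
qed

lemma has_bochner_integral_PF:
  assumes \<phi>: "integrable lborel \<phi>" and B [measurable]: "B \<in> sets borel" "B \<subseteq> {0..1}"
  shows "has_bochner_integral lborel (\<lambda>y. indicator B y * PF \<phi> y)
    (\<integral>x. indicator (Farey q -` B \<inter> {0..1}) x * \<phi> x \<partial>lborel)"
proof -
  let ?A = "Farey q -` B \<inter> {0..1}"
  have A [measurable]: "?A \<in> sets borel"
    by measurable
  have int_A: "integrable lborel (\<lambda>x. indicator ?A x * \<psi> x)" if "integrable lborel \<psi>" for \<psi> :: "real \<Rightarrow> real"
    using integrable_mult_indicator[of ?A lborel \<psi>] that by simp
  have nonneg: "has_bochner_integral lborel (\<lambda>y. indicator B y * PF \<psi> y) (\<integral>x. indicator ?A x * \<psi> x \<partial>lborel)"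
    if \<psi>: "integrable lborel \<psi>" "\<And>x. 0 \<le> \<psi> x" for \<psi>
  proof (rule has_bochner_integral_nn_integral)
    have [measurable]: "\<psi> \<in> borel_measurable borel"
      using \<psi>(1) by simp
    from int_A[OF \<psi>(1)] show "(\<integral>\<^sup>+y. ennreal (indicator B y * PF \<psi> y) \<partial>lborel) = ennreal (\<integral>x. indicator ?A x * \<psi> x \<partial>lborel)"
      using nn_integral_PF[OF B(1) _ B(2) \<psi>(2)] \<psi>(2) by (simp add: nn_integral_eq_integral)
    show "0 \<le> (\<integral>x. indicator ?A x * \<psi> x \<partial>lborel)"
      using \<psi>(2) by simp
  qed (use that in \<open>simp_all add: PF_nonneg\<close>)
  define p n where "p x = max (\<phi> x) 0" and "n x = max (- \<phi> x) 0" for x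
  have "integrable lborel p" "integrable lborel n"
    unfolding p_def n_def using \<phi> by auto
  then have "has_bochner_integral lborel (\<lambda>y. indicator B y * PF p y - indicator B y * PF n y)
      ((\<integral>x. indicator ?A x * p x \<partial>lborel) - (\<integral>x. indicator ?A x * n x \<partial>lborel))"
    by (intro has_bochner_integral_diff nonneg) (auto simp: p_def n_def)
  moreover have "\<phi> = (\<lambda>x. p x - n x)"
    by (auto simp: p_def n_def)
  ultimately show ?thesis
    using int_A[OF \<open>integrable lborel p\<close>] int_A[OF \<open>integrable lborel n\<close>]
    by (simp add: PF_diff right_diff_distrib)
qed

lemma abs_mob'_mult_hfun_H:
  assumes "k \<in> Kq q" "0 < y"
  shows "\<bar>mob' (minv (branch (k, False))) y\<bar> * hfun (H (k, False) y) =
      s k / (s k * y + s (k + 1)) - s (k - 1) / (s (k - 1) * y + s k)"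
    and "\<bar>mob' (minv (branch (k, True))) y\<bar> * hfun (H (k, True) y) =
      s k / (s k * y + s (k - 1)) - s (k + 1) / (s (k + 1) * y + s k)"
proof -
  have "0 < k"
    using assms(1) m_pos by (simp add: mem_Kq)
  have pos: "0 < s k * y + s (k + 1)" "0 < s (k - 1) * y + s k"
    "0 < s k * y + s (k - 1)" "0 < s (k + 1) * y + s k"
    using s_pos_Kq[OF assms(1)] assms(2) by (simp_all add: add_pos_nonneg add_nonneg_pos)
  have det: "s k * s k - s (k + 1) * s (k - 1) = 1"
    using s_det[OF \<open>0 < k\<close>] .
  show "\<bar>mob' (minv (branch (k, False))) y\<bar> * hfun (H (k, False) y) =
      s k / (s k * y + s (k + 1)) - s (k - 1) / (s (k - 1) * y + s k)"
    using abs_mob'_div_mob[of "s k" y "s (k + 1)" "s (k - 1)" "s k"] pos det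
    by (simp add: H_def hfun_def minv_branch[OF \<open>0 < k\<close>])
  show "\<bar>mob' (minv (branch (k, True))) y\<bar> * hfun (H (k, True) y) =
      s k / (s k * y + s (k - 1)) - s (k + 1) / (s (k + 1) * y + s k)"
    using abs_mob'_div_mob[of "s (k + 1)" y "s k" "s k" "s (k - 1)"] pos det
    by (simp add: H_def hfun_def minv_branch[OF \<open>0 < k\<close>] mob_uminus mob'_uminus algebra_simps)
qed

text \<open>The summands of PF telescope to h(y) = 1/y.\<close>

lemma PF_inverse:
  assumes y: "0 < y" "y \<le> 1"
  shows "PF (\<lambda>x. indicator {0..1} x * hfun x) y = hfun y"
proof -
  define f where "f j = s (j - 1) / (s (j - 1) * y + s j)" for j
  define g where "g j = s j / (s j * y + s (j - 1))" for j
  have "H j y \<in> {0..1}" if "j \<in> J" for j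
    using I_subset_unit_interval[OF that] y unfolding I_def by (auto simp: image_subset_iff)
  then have "PF (\<lambda>x. indicator {0..1} x * hfun x) y =
      (\<Sum>k\<in>Kq q. (f (Suc k) - f k) - (g (Suc k) - g k))"
    unfolding PF_def sum_J using y by (intro sum.cong) (simp_all add: abs_mob'_mult_hfun_H f_def g_def)
  also have "\<dots> = (f q - f (m + 1)) - (g q - g (m + 1))"
  proof -
    have "m + 1 \<le> Suc (q - 1)" "Suc (q - 1) = q"
      using q_eq by arith+
    then show ?thesis
      by (simp only: Kq_eq sum_subtractf[of "\<lambda>k. f (Suc k) - f k"] sum_Suc_diff)
  qed
  also have "\<dots> = 1 / y"
  proof -
    have "0 < s m" "0 < s (q - 1)"
      using m_pos q_eq q_ge_3 by (intro s_pos; linarith)+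
    with y s_Suc_m s_q show ?thesis
      by (simp add: f_def g_def distrib_left[symmetric])
  qed
  finally show ?thesis
    by (simp add: hfun_def)
qed

section \<open>Invariance of mu and its transfer operator\<close>

lemma Farey_measurable_mu: "Farey q \<in> mu \<rightarrow>\<^sub>M mu"
proof -
  have "Farey q \<in> restrict_space lborel {0..1} \<rightarrow>\<^sub>M restrict_space lborel {0..1}"
    using Farey_in_unit_interval
    by (intro measurable_restrict_space2 measurable_restrict_space1) auto
  then show ?thesis
    unfolding mu_def by (simp cong: measurable_cong_sets)
qed

lemma invariant_mu: "invariant_measure mu (Farey q)"
  unfolding invariant_measure_def
proof (intro conjI ballI Farey_measurable_mu)
  fix B
  assume "B \<in> sets mu"
  then have B: "B \<in> sets borel" "B \<subseteq> {0..1}"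
    by (simp_all add: sets_mu)
  let ?A = "Farey q -` B \<inter> {0..1}"
  let ?h = "\<lambda>x. indicator {0..1} x * hfun x"
  have "emeasure mu (Farey q -` B \<inter> space mu) = (\<integral>\<^sup>+x. ennreal (indicator ?A x * ?h x) \<partial>lborel)"
    using measurable_sets[OF Farey_measurable_mu \<open>B \<in> sets mu\<close>]
    by (simp add: emeasure_mu space_mu) (auto intro!: nn_integral_cong simp: indicator_def)
  also have "\<dots> = (\<integral>\<^sup>+y. ennreal (indicator B y * PF ?h y) \<partial>lborel)"
    using B by (intro nn_integral_PF[symmetric]) (auto simp: hfun_def indicator_def)
  also have "\<dots> = (\<integral>\<^sup>+y. ennreal (indicator B y * hfun y) \<partial>lborel)"
  proof (intro nn_integral_cong_AE)
    show "AE y in lborel. ennreal (indicator B y * PF ?h y) = ennreal (indicator B y * hfun y)"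
      using AE_lborel_singleton[of 0]
    proof eventually_elim
      case (elim y)
      with B(2) show ?case
        by (cases "y \<in> B") (auto simp: PF_inverse)
    qed
  qed
  also have "\<dots> = emeasure mu B"
    using \<open>B \<in> sets mu\<close> by (simp add: emeasure_mu)
  finally show "emeasure mu (Farey q -` B \<inter> space mu) = emeasure mu B" .
qed

lemma Pq_div_hfun_eq: "x \<in> {0..1} \<Longrightarrow> Pq q \<phi> x / hfun x = x * PF \<phi> x"
  by (simp add: hfun_def Pq_eq_PF)

lemma Pq_div_hfun_measurable:
  assumes [measurable]: "\<phi> \<in> borel_measurable borel"
  shows "(\<lambda>x. Pq q \<phi> x / hfun x) \<in> borel_measurable mu"
proof -
  have "(\<lambda>x. indicator {0..1} x * (Pq q \<phi> x / hfun x)) = (\<lambda>x. indicator {0..1} x * (x * PF \<phi> x))"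
    by (auto simp: fun_eq_iff Pq_div_hfun_eq indicator_def)
  then show ?thesis
    unfolding measurable_mu_iff by simp
qed

lemma has_bochner_integral_Pq_div_hfun:
  assumes \<phi>: "integrable lborel \<phi>" and B: "B \<in> sets mu"
  shows "has_bochner_integral lborel (\<lambda>x. indicator B x * (hfun x * (Pq q \<phi> x / hfun x)))
    (\<integral>x. indicator (Farey q -` B \<inter> {0..1}) x * \<phi> x \<partial>lborel)"
proof -
  define g where "g x = Pq q \<phi> x / hfun x" for x
  have g_eq: "g x = x * PF \<phi> x" if "x \<in> {0..1}" for x
    unfolding g_def using that by (rule Pq_div_hfun_eq)
  have [measurable]: "\<phi> \<in> borel_measurable borel" "B \<in> sets borel" and B01: "B \<subseteq> {0..1}"
    using \<phi> B by (simp_all add: sets_mu)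
  have [measurable]: "(\<lambda>x. indicator {0..1} x * g x) \<in> borel_measurable lborel"
    using Pq_div_hfun_measurable[of \<phi>] unfolding g_def measurable_mu_iff by simp
  have "(\<lambda>x. indicator B x * (hfun x * g x)) = (\<lambda>x. indicator B x * hfun x * (indicator {0..1} x * g x))"
    using B01 by (auto simp: fun_eq_iff indicator_def)
  then have meas_g: "(\<lambda>x. indicator B x * (hfun x * g x)) \<in> borel_measurable lborel"
    by simp
  have meas_PF: "(\<lambda>x. indicator B x * PF \<phi> x) \<in> borel_measurable lborel"
    by measurable
  have "AE x in lborel. indicator B x * PF \<phi> x = indicator B x * (hfun x * g x)"
    using AE_lborel_singleton[of 0]
  proof eventually_elim
    case (elim x)
    with B01 show ?case
      by (cases "x \<in> B") (auto simp: g_eq hfun_def)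
  qed
  then show ?thesis
    using has_bochner_integral_PF[OF \<phi> _ B01] has_bochner_integral_cong_AE[OF meas_PF meas_g]
    by (simp add: g_def)
qed

lemma is_transfer_image_Pq:
  assumes f: "integrable mu f"
  shows "is_transfer_image mu (Farey q) f
    (\<lambda>x. Pq q (\<lambda>y. indicator {0..1} y * (f y * hfun y)) x / hfun x)"
proof -
  define \<phi> where "\<phi> y = indicator {0..1} y * (f y * hfun y)" for y
  define g where "g x = Pq q \<phi> x / hfun x" for x
  have f_meas: "f \<in> borel_measurable mu"
    using f by simp
  have \<phi>: "integrable lborel \<phi>"
    using f integral_mu(2)[OF f_meas] unfolding \<phi>_def by (simp add: mult.commute)
  then have g_meas: "g \<in> borel_measurable mu"
    unfolding g_def by (intro Pq_div_hfun_measurable) simp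
  have "integrable lborel (\<lambda>x. indicator {0..1} x * (hfun x * g x))"
    unfolding g_def by (rule integrable.intros[OF has_bochner_integral_Pq_div_hfun[OF \<phi>]])
      (simp add: sets_mu)
  then have "integrable mu g"
    unfolding integral_mu(2)[OF g_meas] .
  moreover have "(\<integral>x\<in>B. g x \<partial>mu) = (\<integral>x\<in>Farey q -` B \<inter> space mu. f x \<partial>mu)"
    if B: "B \<in> sets mu" for B
  proof -
    let ?A = "Farey q -` B \<inter> {0..1}"
    have A: "?A \<in> sets mu"
      using measurable_sets[OF Farey_measurable_mu B] by (simp add: space_mu)
    have "(\<integral>x\<in>B. g x \<partial>mu) = (\<integral>x. indicator B x * (hfun x * g x) \<partial>lborel)"
      by (rule set_integral_mu[OF B g_meas])
    also have "\<dots> = (\<integral>x. indicator ?A x * \<phi> x \<partial>lborel)"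
      unfolding g_def by (rule has_bochner_integral_integral_eq[OF has_bochner_integral_Pq_div_hfun[OF \<phi> B]])
    also have "\<dots> = (\<integral>x. indicator ?A x * (hfun x * f x) \<partial>lborel)"
      by (intro Bochner_Integration.integral_cong) (auto simp: \<phi>_def indicator_def)
    also have "\<dots> = (\<integral>x\<in>Farey q -` B \<inter> space mu. f x \<partial>mu)"
      using set_integral_mu[OF A f_meas] by (simp add: space_mu)
    finally show ?thesis .
  qed
  ultimately show ?thesis
    unfolding is_transfer_image_def g_def \<phi>_def by blast
qed

end

theorem proposition2p7:
  fixes q :: nat
  assumes "odd q" and "q \<ge> 3"
  shows "emeasure mu (space mu) = \<infinity> \<and> sigma_finite_measure mu \<and>
         invariant_measure mu (Farey q) \<and>
         (\<forall>f. integrable mu f \<longrightarrow>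
            is_transfer_image mu (Farey q) f
              (\<lambda>x. Pq q (\<lambda>y. indicator {0..1} y * (f y * hfun y)) x / hfun x))"
proof -
  interpret odd_farey q
    using assms by unfold_locales
  show ?thesis
    using mu_infinite mu_sigma_finite invariant_mu is_transfer_image_Pq by blast
qed

end
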